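(* Let $K\in\mathbb{R}^{n\times n}$ be any positive semi-definite matrix, $\widetilde{S}\in\mathbb{R}^{n\times m}$, $\lambda>0$, and let $f:\mathbb{R}^n\to\mathbb{R}$ be convex and differentiable with $\mu$-Lipschitz gradient. Let $w^*$ be any minimizer of $w\mapsto f(Kw)+\frac{\lambda}{2}w^\top Kw$ over $\mathbb{R}^n$, let $\alpha^*$ be any minimizer of $\alpha\mapsto f(K\widetilde{S}\alpha)+\frac{\lambda}{2}\alpha^\top\widetilde{S}^\top K\widetilde{S}\alpha$ over $\mathbb{R}^m$, and define $\widetilde{w}=-\frac{1}{\lambda}\nabla f(K\widetilde{S}\alpha^* )$. If $\lambda\ge 2\mu Z_f^2$ with $Z_f=Z_f(K^{1/2},K^{1/2}\widetilde{S})$, then $$\|K^{1/2}(\widetilde{w}-w^* )\|_2\le\sqrt{\frac{\mu}{2\lambda}}\,Z_f\,\|K^{1/2}w^*\|_2 .$$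
   Context: $K^{1/2}$ is the p.s.d. square root of $K$. $f^*(z)=\sup_w\{w^\top z-f(w)\}$ is the Fenchel conjugate of $f$ with domain $\mathrm{dom} f^*$. For a matrix $B\in\mathbb{R}^{n\times p}$ and $S\in\mathbb{R}^{p\times m}$: let $x_B^*$ be the minimizer of $x\mapsto f(Bx)+\frac{\lambda}{2}\|x\|_2^2$, $z^*=\nabla f(Bx_B^* )$, $P_S=S(S^\top S)^\dagger S^\top$, $P_S^\perp=I_p-P_S$, and $Z_f(B,S)=\sup_{\Delta\in(\mathrm{dom} f^*-z^* ),\,\Delta\ne0}\left(\frac{\Delta^\top BP_S^\perp B^\top\Delta}{\|\Delta\|_2^2}\right)^{1/2}$. *)

theory Defs
  imports "HOL-Analysis.Analysis"
begin

definition psd :: "real^'n^'n \<Rightarrow> bool" where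
  "psd K \<longleftrightarrow> transpose K = K \<and> (\<forall>x. 0 \<le> x \<bullet> (K *v x))"

definition msqrt :: "real^'n^'n \<Rightarrow> real^'n^'n" where
  "msqrt K = (THE R. psd R \<and> R ** R = K)"

definition pinv :: "real^'n^'m \<Rightarrow> real^'m^'n" where
  "pinv A = (THE X. A ** X ** A = A \<and> X ** A ** X = X \<and>
                    transpose (A ** X) = A ** X \<and> transpose (X ** A) = X ** A)"

definition grad :: "(real^'n \<Rightarrow> real) \<Rightarrow> real^'n \<Rightarrow> real^'n" where
  "grad f x = (THE g. (f has_derivative (\<lambda>h. g \<bullet> h)) (at x))"

text \<open>Domain of the Fenchel conjugate: points where the supremum is finite.\<close>
definition conj_dom :: "(real^'n \<Rightarrow> real) \<Rightarrow> (real^'n) set" where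
  "conj_dom f = {z. \<exists>c. \<forall>w. w \<bullet> z - f w \<le> c}"

text \<open>The quantity Z_f(B,S); the supremum over an empty set is taken to be 0.\<close>
definition Zf :: "(real^'n \<Rightarrow> real) \<Rightarrow> real \<Rightarrow> real^'p^'n \<Rightarrow> real^'k^'p \<Rightarrow> real" where
  "Zf f lam B S =
    (let xB = (SOME x. \<forall>y. f (B *v x) + lam / 2 * (norm x)^2 \<le> f (B *v y) + lam / 2 * (norm y)^2);
         z = grad f (B *v xB);
         Pperp = mat 1 - S ** pinv (transpose S ** S) ** transpose S
     in Sup (insert 0 {sqrt ((\<Delta> \<bullet> ((B ** Pperp ** transpose B) *v \<Delta>)) / (norm \<Delta>)^2) | \<Delta>.
                          \<Delta> \<in> (\<lambda>d. d - z) ` conj_dom f \<and> \<Delta> \<noteq> 0}))"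

end

theory Submission
  imports Defs
begin

text \<open>Write \<open>B = msqrt K\<close>, \<open>x = B w\<^sup>*\<close>, \<open>S = B St\<close> and \<open>P\<close> for the orthogonal projection onto the
  range of \<open>S\<close>. The two optimality conditions read \<open>B z = -\<lambda> x\<close> and \<open>P B z' = -\<lambda> S \<alpha>\<^sup>*\<close> for the dual
  points \<open>z = \<nabla>f(B x)\<close> and \<open>z' = \<nabla>f(B S \<alpha>\<^sup>*)\<close>, so the error equals \<open>\<parallel>u\<parallel> / \<lambda>\<close> with
  \<open>u = B (z' - z)\<close>. Cocoercivity of \<open>\<nabla>f\<close> bounds \<open>\<parallel>P u\<parallel>\<close> in terms of \<open>\<parallel>z' - z\<parallel>\<close> and \<open>(I - P) u\<close>; since
  \<open>z'\<close> lies in the domain of \<open>f\<^sup>*\<close>, the definition of \<open>Z\<^sub>f\<close> gives \<open>\<parallel>(I - P) u\<parallel> \<le> Z\<^sub>f \<parallel>z' - z\<parallel>\<close>, and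
  maximising the resulting quadratic in \<open>\<parallel>z' - z\<parallel>\<close> yields the bound.\<close>

section \<open>Gradients of smooth convex functions\<close>

lemma has_derivative_grad:
  fixes f :: "real^'n \<Rightarrow> real"
  assumes "f differentiable (at x)"
  shows "(f has_derivative (\<lambda>h. grad f x \<bullet> h)) (at x)"
proof -
  obtain D where D: "(f has_derivative D) (at x)"
    using assms differentiable_def by blast
  define g where "g = adjoint D 1"
  have Dg: "D = (\<lambda>h. g \<bullet> h)"
    using adjoint_works[OF has_derivative_linear[OF D], of _ 1] by (auto simp: g_def inner_commute)
  have "grad f x = g"
    unfolding grad_def
  proof (rule the_equality)
    show "(f has_derivative (\<lambda>h. g \<bullet> h)) (at x)" using D Dg by simp
  next
    fix g' assume "(f has_derivative (\<lambda>h. g' \<bullet> h)) (at x)"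
    then have "(\<lambda>h. g' \<bullet> h) = (\<lambda>h. g \<bullet> h)" using D Dg has_derivative_unique by blast
    then have "(g' - g) \<bullet> (g' - g) = 0" by (metis inner_diff_left right_minus_eq)
    then show "g' = g" by simp
  qed
  then show ?thesis using D Dg by simp
qed

lemma matrix_vector_mult_inner_transpose:
  fixes A :: "real^'n^'m"
  shows "(A *v x) \<bullet> y = x \<bullet> (transpose A *v y)"
  by (metis dot_lmul_matrix inner_commute transpose_matrix_vector)

lemma minimizer_grad_eq_0:
  fixes f :: "real^'n \<Rightarrow> real" and L :: "real^'a^'n" and Q :: "real^'a^'a"
  assumes f_diff: "\<forall>x. f differentiable (at x)" and Q_sym: "transpose Q = Q"
    and min: "\<forall>w. f (L *v w0) + lam / 2 * (w0 \<bullet> (Q *v w0)) \<le> f (L *v w) + lam / 2 * (w \<bullet> (Q *v w))"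
  shows "transpose L *v grad f (L *v w0) + lam *\<^sub>R (Q *v w0) = 0"
proof -
  define v where "v = transpose L *v grad f (L *v w0) + lam *\<^sub>R (Q *v w0)"
  have "((\<lambda>w. f (L *v w)) has_derivative (\<lambda>h. grad f (L *v w0) \<bullet> (L *v h))) (at w0)"
    using has_derivative_compose[OF bounded_linear.has_derivative[OF matrix_vector_mul_bounded_linear
        has_derivative_ident] has_derivative_grad] f_diff by blast
  then have "((\<lambda>w. f (L *v w) + lam / 2 * (w \<bullet> (Q *v w))) has_derivative
          (\<lambda>h. grad f (L *v w0) \<bullet> (L *v h) + lam / 2 * (h \<bullet> (Q *v w0) + w0 \<bullet> (Q *v h)))) (at w0)"
    by (auto intro!: derivative_eq_intros matrix_vector_mul_bounded_linear[THEN bounded_linear.has_derivative])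
  moreover have "eventually (\<lambda>w. f (L *v w0) + lam / 2 * (w0 \<bullet> (Q *v w0))
      \<le> f (L *v w) + lam / 2 * (w \<bullet> (Q *v w))) (at w0)"
    using min by simp
  ultimately have "(\<lambda>h. grad f (L *v w0) \<bullet> (L *v h) + lam / 2 * (h \<bullet> (Q *v w0) + w0 \<bullet> (Q *v h)))
      = (\<lambda>h. 0)"
    by (rule has_derivative_local_min)
  then have "grad f (L *v w0) \<bullet> (L *v v) + lam / 2 * (v \<bullet> (Q *v w0) + w0 \<bullet> (Q *v v)) = 0"
    by metis
  moreover have "grad f (L *v w0) \<bullet> (L *v v) = (transpose L *v grad f (L *v w0)) \<bullet> v"
    by (metis inner_commute matrix_vector_mult_inner_transpose)
  moreover have "w0 \<bullet> (Q *v v) = v \<bullet> (Q *v w0)"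
    by (metis Q_sym inner_commute matrix_vector_mult_inner_transpose)
  ultimately have "v \<bullet> v = 0"
    by (simp add: v_def inner_add_left inner_commute)
  then show ?thesis by (simp add: v_def)
qed

lemma has_real_derivative_grad_along_line:
  fixes f :: "real^'n \<Rightarrow> real"
  assumes "\<forall>x. f differentiable (at x)"
  shows "((\<lambda>t. f (x + t *\<^sub>R d)) has_real_derivative (grad f (x + t *\<^sub>R d) \<bullet> d)) (at t)"
proof -
  have "((\<lambda>t. x + t *\<^sub>R d) has_derivative (\<lambda>s. s *\<^sub>R d)) (at t)"
    by (auto intro!: derivative_eq_intros)
  from has_derivative_compose[OF this has_derivative_grad]
  have "((\<lambda>t. f (x + t *\<^sub>R d)) has_derivative (\<lambda>s. grad f (x + t *\<^sub>R d) \<bullet> (s *\<^sub>R d))) (at t)"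
    using assms by blast
  then show ?thesis
    by (simp add: has_field_derivative_def mult.commute[of _ "grad f (x + t *\<^sub>R d) \<bullet> d"])
qed

lemma convex_grad_above_tangent:
  fixes f :: "real^'n \<Rightarrow> real"
  assumes f_convex: "convex_on UNIV f" and f_diff: "\<forall>x. f differentiable (at x)"
  shows "f x + grad f x \<bullet> (y - x) \<le> f y"
proof -
  define \<phi> where "\<phi> = (\<lambda>t::real. f (x + t *\<^sub>R (y - x)))"
  have "convex_on UNIV \<phi>"
  proof (rule convex_onI)
    fix t a b :: real assume t: "0 < t" "t < 1"
    have "x + ((1 - t) *\<^sub>R a + t *\<^sub>R b) *\<^sub>R (y - x)
            = (1 - t) *\<^sub>R (x + a *\<^sub>R (y - x)) + t *\<^sub>R (x + b *\<^sub>R (y - x))"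
      by (simp add: algebra_simps)
    then show "\<phi> ((1 - t) *\<^sub>R a + t *\<^sub>R b) \<le> (1 - t) * \<phi> a + t * \<phi> b"
      unfolding \<phi>_def using convex_onD[OF f_convex, of t] t by simp
  qed auto
  moreover have "(\<phi> has_real_derivative (grad f x \<bullet> (y - x))) (at 0 within UNIV)"
    using has_real_derivative_grad_along_line[OF f_diff, of x "y - x" 0] unfolding \<phi>_def by simp
  ultimately have "(grad f x \<bullet> (y - x)) * (1 - 0) \<le> \<phi> 1 - \<phi> 0"
    by (intro convex_on_imp_above_tangent) auto
  then show ?thesis unfolding \<phi>_def by simp
qed

lemma lipschitz_grad_below_quadratic:
  fixes f :: "real^'n \<Rightarrow> real"
  assumes f_diff: "\<forall>x. f differentiable (at x)"
    and f_lip: "\<forall>x y. norm (grad f x - grad f y) \<le> mu * norm (x - y)"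
  shows "f y \<le> f x + grad f x \<bullet> (y - x) + mu / 2 * (norm (y - x))^2"
proof -
  define d where "d = y - x"
  define h where "h = (\<lambda>t. f (x + t *\<^sub>R d) - t * (grad f x \<bullet> d) - mu / 2 * t^2 * (norm d)^2)"
  have "h 1 \<le> h 0"
  proof (rule DERIV_nonpos_imp_nonincreasing[of 0 1 h])
    fix t :: real assume t: "0 \<le> t" "t \<le> 1"
    have "(h has_real_derivative (grad f (x + t *\<^sub>R d) \<bullet> d - grad f x \<bullet> d - mu * t * (norm d)^2)) (at t)"
      unfolding h_def using has_real_derivative_grad_along_line[OF f_diff]
      by (auto intro!: derivative_eq_intros)
    moreover have "grad f (x + t *\<^sub>R d) \<bullet> d - grad f x \<bullet> d \<le> mu * t * (norm d)^2"
    proof -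
      have "grad f (x + t *\<^sub>R d) \<bullet> d - grad f x \<bullet> d \<le> norm (grad f (x + t *\<^sub>R d) - grad f x) * norm d"
        by (metis inner_diff_left norm_cauchy_schwarz)
      also have "\<dots> \<le> mu * norm (t *\<^sub>R d) * norm d"
        using f_lip[rule_format, of "x + t *\<^sub>R d" x] by (intro mult_right_mono) auto
      finally show ?thesis using t by (simp add: power2_eq_square)
    qed
    ultimately show "\<exists>y. (h has_real_derivative y) (at t) \<and> y \<le> 0"
      by force
  qed simp
  then show ?thesis unfolding h_def d_def by simp
qed

text \<open>Evaluate the two first-order bounds at the gradient step \<open>y - \<delta> / \<mu>\<close>.\<close>
lemma convex_lipschitz_grad_gap:
  fixes f :: "real^'n \<Rightarrow> real"
  assumes f_convex: "convex_on UNIV f" and f_diff: "\<forall>x. f differentiable (at x)"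
    and f_lip: "\<forall>x y. norm (grad f x - grad f y) \<le> mu * norm (x - y)" and mu: "mu > 0"
  shows "f x + grad f x \<bullet> (y - x) + (norm (grad f y - grad f x))^2 / (2 * mu) \<le> f y"
proof -
  define \<delta> where "\<delta> = grad f y - grad f x"
  define w where "w = y - (1 / mu) *\<^sub>R \<delta>"
  have "f x + grad f x \<bullet> (w - x) \<le> f w"
    by (rule convex_grad_above_tangent[OF f_convex f_diff])
  moreover have "f w \<le> f y + grad f y \<bullet> (w - y) + mu / 2 * (norm (w - y))^2"
    by (rule lipschitz_grad_below_quadratic[OF f_diff f_lip])
  moreover have "grad f x \<bullet> (w - x) - grad f y \<bullet> (w - y) = grad f x \<bullet> (y - x) + (norm \<delta>)^2 / mu"
    by (simp add: w_def \<delta>_def inner_diff_right inner_diff_left power2_norm_eq_inner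
        diff_divide_distrib add_divide_distrib inner_commute algebra_simps)
  moreover have "mu / 2 * (norm (w - y))^2 = (norm \<delta>)^2 / (2 * mu)"
    using mu by (simp add: w_def power2_eq_square field_simps)
  moreover have "(norm \<delta>)^2 / mu = 2 * ((norm \<delta>)^2 / (2 * mu))"
    by simp
  ultimately show ?thesis
    unfolding \<delta>_def[symmetric] by linarith
qed

lemma grad_cocoercive:
  fixes f :: "real^'n \<Rightarrow> real"
  assumes f_convex: "convex_on UNIV f" and f_diff: "\<forall>x. f differentiable (at x)"
    and f_lip: "\<forall>x y. norm (grad f x - grad f y) \<le> mu * norm (x - y)"
  shows "(norm (grad f y - grad f x))^2 \<le> mu * ((grad f y - grad f x) \<bullet> (y - x))"
proof (cases "mu > 0")
  case True
  have "f x + grad f x \<bullet> (y - x) + (norm (grad f y - grad f x))^2 / (2 * mu) \<le> f y"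
    and "f y + grad f y \<bullet> (x - y) + (norm (grad f x - grad f y))^2 / (2 * mu) \<le> f x"
    by (rule convex_lipschitz_grad_gap[OF f_convex f_diff f_lip True])+
  then have "(norm (grad f y - grad f x))^2 / mu \<le> (grad f y - grad f x) \<bullet> (y - x)"
    by (simp add: norm_minus_commute inner_diff_left inner_diff_right add_divide_distrib[symmetric] algebra_simps)
  then show ?thesis
    using True by (simp add: divide_le_eq mult.commute)
next
  case False
  then have "norm (grad f y - grad f x) \<le> 0"
    using f_lip by (meson mult_nonpos_nonneg norm_ge_zero not_less order_trans)
  then show ?thesis by simp
qed

lemma lipschitz_const_nonneg:
  fixes g :: "'a::euclidean_space \<Rightarrow> 'b::real_normed_vector"
  assumes "\<forall>x y. norm (g x - g y) \<le> mu * norm (x - y)"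
  shows "0 \<le> mu"
proof -
  obtain b :: 'a where "b \<in> Basis" using nonempty_Basis by blast
  then have "norm (g b - g 0) \<le> mu" using assms[rule_format, of b 0] by simp
  then show ?thesis using norm_ge_zero order_trans by blast
qed

section \<open>The spectral theorem for symmetric matrices\<close>

lemma symmetric_matrix_inner:
  fixes A :: "real^'n^'n"
  assumes "transpose A = A"
  shows "(A *v x) \<bullet> y = x \<bullet> (A *v y)"
  by (metis assms matrix_vector_mult_inner_transpose)

lemma symmetric_matrixI:
  fixes A :: "real^'n^'n"
  assumes "\<And>x y. (A *v x) \<bullet> y = x \<bullet> (A *v y)"
  shows "transpose A = A"
proof -
  have "(transpose A *v x - A *v x) \<bullet> y = 0" for x y
    using assms by (simp add: inner_diff_left dot_lmul_matrix)
  then have "transpose A *v x = A *v x" for x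
    by (metis inner_eq_zero_iff right_minus_eq)
  then show ?thesis by (simp add: matrix_eq)
qed

lemma rayleigh_quotient_max_exists:
  fixes f :: "'a::euclidean_space \<Rightarrow> 'a"
  assumes lf: "linear f" and V: "subspace V" and V_ne: "V \<noteq> {0}"
  obtains v where "v \<in> V" "norm v = 1" "\<And>y. y \<in> V \<Longrightarrow> y \<bullet> f y \<le> (v \<bullet> f v) * (norm y)^2"
proof -
  define Sph where "Sph = V \<inter> sphere 0 1"
  have "compact Sph"
    unfolding Sph_def using closed_subspace[OF V] compact_sphere by blast
  moreover obtain x where x: "x \<in> V" "x \<noteq> 0"
    using V_ne V subspace_0 by blast
  then have "(1 / norm x) *\<^sub>R x \<in> Sph"
    unfolding Sph_def using V by (auto simp: subspace_scale)
  then have "Sph \<noteq> {}" by blast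
  moreover have "continuous_on Sph (\<lambda>x. x \<bullet> f x)"
    using lf by (intro continuous_intros linear_continuous_on linear_conv_bounded_linear[THEN iffD1])
  ultimately obtain v where v: "v \<in> Sph" and v_max: "\<And>y. y \<in> Sph \<Longrightarrow> y \<bullet> f y \<le> v \<bullet> f v"
    using continuous_attains_sup by metis
  have "y \<bullet> f y \<le> (v \<bullet> f v) * (norm y)^2" if y: "y \<in> V" for y
  proof (cases "y = 0")
    case True then show ?thesis by (simp add: linear_0[OF lf])
  next
    case False
    have "(y /\<^sub>R norm y) \<in> Sph"
      using y False V by (auto simp: Sph_def subspace_scale)
    from v_max[OF this] have "(y \<bullet> f y) / (norm y)^2 \<le> v \<bullet> f v"
      by (simp add: linear_scale[OF lf] power2_eq_square divide_inverse mult_ac)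
    then show ?thesis
      using False by (simp add: divide_le_eq)
  qed
  with v that show ?thesis
    unfolding Sph_def by auto
qed

lemma first_order_term_nonpos:
  fixes a c :: real
  assumes "0 \<le> c" and "\<And>s. 0 < s \<Longrightarrow> 2 * s * a \<le> s^2 * c"
  shows "a \<le> 0"
proof (rule ccontr)
  assume "\<not> a \<le> 0"
  define s where "s = a / (c + 1)"
  have s: "0 < s"
    using \<open>\<not> a \<le> 0\<close> assms(1) by (simp add: s_def)
  from assms(2)[OF s] have "2 * a \<le> s * c"
    using s by (simp add: power2_eq_square mult.assoc)
  also have "s * c < a"
    using \<open>\<not> a \<le> 0\<close> assms(1) by (simp add: s_def field_simps)
  finally show False
    using \<open>\<not> a \<le> 0\<close> by simp
qed

text \<open>A maximiser \<open>v\<close> of the Rayleigh quotient is an eigenvector: otherwise moving from \<open>v\<close> a little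
  along \<open>u = (v \<bullet> f v) v - f v\<close> would increase the quotient.\<close>
lemma rayleigh_quotient_max_eigenvector:
  fixes f :: "'a::euclidean_space \<Rightarrow> 'a"
  assumes lf: "linear f" and sa: "\<And>x y. f x \<bullet> y = x \<bullet> f y"
    and V: "subspace V" and fV: "f ` V \<subseteq> V" and v: "v \<in> V" "norm v = 1"
    and v_max: "\<And>y. y \<in> V \<Longrightarrow> y \<bullet> f y \<le> (v \<bullet> f v) * (norm y)^2"
  shows "f v = (v \<bullet> f v) *\<^sub>R v"
proof -
  define m where "m = v \<bullet> f v"
  define u where "u = m *\<^sub>R v - f v"
  define c where "c = m * (norm u)^2 - u \<bullet> f u"
  have vv: "v \<bullet> v = 1" using v(2) by (simp add: norm_eq_1)
  have u: "u \<in> V"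
    unfolding u_def using v fV V by (auto intro: subspace_diff subspace_scale)
  then have c: "0 \<le> c"
    using v_max by (simp add: c_def m_def)
  have key: "2 * s * (norm u)^2 \<le> s^2 * c" for s
  proof -
    have "v - s *\<^sub>R u \<in> V"
      using v u V by (auto intro: subspace_diff subspace_scale)
    from v_max[OF this, folded m_def]
    have "(v - s *\<^sub>R u) \<bullet> f (v - s *\<^sub>R u) \<le> m * (norm (v - s *\<^sub>R u))^2" .
    moreover have "(v - s *\<^sub>R u) \<bullet> f (v - s *\<^sub>R u) = m - 2 * s * (u \<bullet> f v) + s^2 * (u \<bullet> f u)"
      using sa[of v u] by (simp add: linear_diff[OF lf] linear_scale[OF lf] inner_diff_left inner_diff_right
          m_def inner_commute power2_eq_square algebra_simps)
    moreover have "(norm (v - s *\<^sub>R u))^2 = 1 - 2 * s * (u \<bullet> v) + s^2 * (norm u)^2"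
      unfolding power2_norm_eq_inner
      by (simp add: inner_diff_left inner_diff_right vv power2_eq_square algebra_simps inner_commute)
    ultimately
    have "m - 2 * s * (u \<bullet> f v) + s^2 * (u \<bullet> f u) \<le> m * (1 - 2 * s * (u \<bullet> v) + s^2 * (norm u)^2)"
      by simp
    then have "2 * s * (m * (u \<bullet> v) - u \<bullet> f v) \<le> s^2 * c"
      by (simp add: c_def algebra_simps)
    moreover have "m * (u \<bullet> v) - u \<bullet> f v = (norm u)^2"
      by (simp add: u_def power2_norm_eq_inner inner_diff_left inner_diff_right algebra_simps)
    ultimately show ?thesis
      by simp
  qed
  have "(norm u)^2 \<le> 0"
    using first_order_term_nonpos[OF c] key by blast
  then have "u = 0"
    by simp
  then show ?thesis by (simp add: u_def m_def)
qed

lemma eigenvector_orthogonal_complement: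
  fixes f :: "'a::euclidean_space \<Rightarrow> 'a"
  assumes sa: "\<And>x y. f x \<bullet> y = x \<bullet> f y"
    and V: "subspace V" and fV: "f ` V \<subseteq> V"
    and v: "v \<in> V" "v \<bullet> v = 1" "f v = c *\<^sub>R v"
  defines "W \<equiv> V \<inter> {x. x \<bullet> v = 0}"
  shows "subspace W" "f ` W \<subseteq> W" "span (insert v W) = V" "dim V = Suc (dim W)"
proof -
  show W: "subspace W"
    unfolding W_def using V by (auto simp: subspace_def inner_add_left)
  show "f ` W \<subseteq> W"
    using fV sa[of _ v] v(3) by (auto simp: W_def)
  show span_eq: "span (insert v W) = V"
  proof
    show "span (insert v W) \<subseteq> V"
      using span_minimal[of "insert v W" V] v V by (auto simp: W_def)
    show "V \<subseteq> span (insert v W)"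
    proof
      fix x assume x: "x \<in> V"
      have "x - (x \<bullet> v) *\<^sub>R v \<in> W"
        using x v V by (auto simp: W_def inner_diff_left intro: subspace_diff subspace_scale)
      then have "(x - (x \<bullet> v) *\<^sub>R v) + (x \<bullet> v) *\<^sub>R v \<in> span (insert v W)"
        by (intro span_add) (simp_all add: span_base span_scale)
      then show "x \<in> span (insert v W)" by simp
    qed
  qed
  have "v \<notin> W"
    using v(2) by (simp add: W_def)
  then have "v \<notin> span W"
    using W span_eq_iff by metis
  then show "dim V = Suc (dim W)"
    using span_eq dim_insert[of v W] dim_span[of "insert v W"] by simp
qed

lemma selfadjoint_eigenbasis_subspace:
  fixes f :: "'a::euclidean_space \<Rightarrow> 'a"
  assumes lf: "linear f" and sa: "\<And>x y. f x \<bullet> y = x \<bullet> f y"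
    and "subspace V" "f ` V \<subseteq> V"
  shows "\<exists>B. finite B \<and> B \<subseteq> V \<and> span B = V \<and> pairwise orthogonal B \<and>
           (\<forall>b\<in>B. norm b = 1 \<and> f b = (b \<bullet> f b) *\<^sub>R b)"
  using assms(3,4)
proof (induction "dim V" arbitrary: V)
  case 0
  have "V = {0}"
    using "0.hyps" dim_eq_0[of V] subspace_0[OF "0.prems"(1)] by auto
  then show ?case by (intro exI[of _ "{}"]) auto
next
  case (Suc n)
  have "V \<noteq> {0}"
    using Suc.hyps(2) by auto
  then obtain v where v: "v \<in> V" "norm v = 1"
    and v_max: "\<And>y. y \<in> V \<Longrightarrow> y \<bullet> f y \<le> (v \<bullet> f v) * (norm y)^2"
    using rayleigh_quotient_max_exists[OF lf Suc.prems(1)] by blast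
  have eig: "f v = (v \<bullet> f v) *\<^sub>R v"
    using rayleigh_quotient_max_eigenvector[OF lf sa Suc.prems v v_max] .
  define W where "W = V \<inter> {x. x \<bullet> v = 0}"
  have vv: "v \<bullet> v = 1" using v(2) by (simp add: norm_eq_1)
  note W = eigenvector_orthogonal_complement[OF sa Suc.prems v(1) vv eig, folded W_def]
  have "n = dim W"
    using Suc.hyps(2) W(4) by simp
  from Suc.hyps(1)[OF this W(1,2)] obtain B where B: "finite B" "B \<subseteq> W" "span B = W"
      "pairwise orthogonal B" "\<forall>b\<in>B. norm b = 1 \<and> f b = (b \<bullet> f b) *\<^sub>R b"
    by blast
  have "span (insert v B) = span (insert v W)"
    unfolding span_insert B(3)[symmetric] span_span ..
  then have "span (insert v B) = V"
    using W(3) by simp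
  moreover have "pairwise orthogonal (insert v B)"
    using B(2,4) by (auto simp: W_def pairwise_insert orthogonal_def inner_commute)
  ultimately show ?case
    using B v eig W_def by (intro exI[of _ "insert v B"]) auto
qed

definition eigenbasis :: "real^'n^'n \<Rightarrow> (real^'n) set \<Rightarrow> bool" where
  "eigenbasis A B \<longleftrightarrow> finite B \<and> span B = UNIV \<and> pairwise orthogonal B \<and>
     (\<forall>b\<in>B. norm b = 1 \<and> A *v b = (b \<bullet> (A *v b)) *\<^sub>R b)"

lemma symmetric_matrix_eigenbasis:
  fixes A :: "real^'n^'n"
  assumes "transpose A = A"
  obtains B where "eigenbasis A B"
proof -
  have "\<exists>B. finite B \<and> span B = UNIV \<and> pairwise orthogonal B \<and>
          (\<forall>b\<in>B. norm b = 1 \<and> A *v b = (b \<bullet> (A *v b)) *\<^sub>R b)"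
    using selfadjoint_eigenbasis_subspace[OF matrix_vector_mul_linear symmetric_matrix_inner[OF assms],
        of UNIV] by auto
  then show ?thesis
    using that unfolding eigenbasis_def by blast
qed

lemma eigenbasis_sum_inner:
  assumes "eigenbasis A B" "b \<in> B"
  shows "(\<Sum>c\<in>B. g c *\<^sub>R c) \<bullet> b = g b"
proof -
  have "(\<Sum>c\<in>B. g c *\<^sub>R c) \<bullet> b = (\<Sum>c\<in>B. if c = b then g b else 0)"
    unfolding inner_sum_left
  proof (rule sum.cong)
    fix c assume "c \<in> B"
    then show "(g c *\<^sub>R c) \<bullet> b = (if c = b then g b else 0)"
      using assms by (auto simp: eigenbasis_def pairwise_def orthogonal_def norm_eq_1)
  qed simp
  also have "\<dots> = g b"
    using assms by (simp add: eigenbasis_def)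
  finally show ?thesis .
qed

lemma eigenbasis_expand:
  assumes "eigenbasis A B"
  shows "(\<Sum>b\<in>B. (x \<bullet> b) *\<^sub>R b) = x"
  using assms by (intro orthonormal_basis_expand) (auto simp: eigenbasis_def)

definition matrix_fun :: "real^'n^'n \<Rightarrow> (real^'n) set \<Rightarrow> (real \<Rightarrow> real) \<Rightarrow> real^'n^'n" where
  "matrix_fun A B \<phi> = matrix (\<lambda>x. \<Sum>b\<in>B. (\<phi> (b \<bullet> (A *v b)) * (x \<bullet> b)) *\<^sub>R b)"

lemma matrix_fun_apply:
  fixes A :: "real^'n^'n"
  shows "matrix_fun A B \<phi> *v x = (\<Sum>b\<in>B. (\<phi> (b \<bullet> (A *v b)) * (x \<bullet> b)) *\<^sub>R b)"
proof -
  have "linear (\<lambda>x::real^'n. \<Sum>b\<in>B. (\<phi> (b \<bullet> (A *v b)) * (x \<bullet> b)) *\<^sub>R b)"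
    by (rule linearI) (simp_all add: inner_add_left distrib_left scaleR_add_left sum.distrib
        scaleR_sum_right algebra_simps)
  then show ?thesis
    unfolding matrix_fun_def by (simp add: matrix_works)
qed

lemma matrix_fun_mult:
  assumes "eigenbasis A B"
  shows "matrix_fun A B \<phi> ** matrix_fun A B \<psi> = matrix_fun A B (\<lambda>t. \<phi> t * \<psi> t)"
proof -
  have "(matrix_fun A B \<psi> *v x) \<bullet> b = \<psi> (b \<bullet> (A *v b)) * (x \<bullet> b)" if "b \<in> B" for x b
    unfolding matrix_fun_apply by (rule eigenbasis_sum_inner[OF assms that])
  then show ?thesis
    by (simp add: matrix_eq matrix_vector_mul_assoc[symmetric] matrix_fun_apply[of A B \<phi>]
        matrix_fun_apply[of A B "\<lambda>t. \<phi> t * \<psi> t"] mult.assoc)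
qed

lemma matrix_fun_symmetric: "transpose (matrix_fun A B \<phi>) = matrix_fun A B \<phi>"
  by (rule symmetric_matrixI)
    (simp add: matrix_fun_apply inner_sum_left inner_sum_right inner_commute mult_ac)

lemma matrix_fun_cong:
  assumes "\<And>b. b \<in> B \<Longrightarrow> \<phi> (b \<bullet> (A *v b)) = \<psi> (b \<bullet> (A *v b))"
  shows "matrix_fun A B \<phi> = matrix_fun A B \<psi>"
  unfolding matrix_fun_def using assms by (metis (no_types, lifting) sum.cong)

lemma matrix_fun_unique:
  assumes B: "eigenbasis A B" and M: "\<And>b. b \<in> B \<Longrightarrow> M *v b = \<phi> (b \<bullet> (A *v b)) *\<^sub>R b"
  shows "M = matrix_fun A B \<phi>"
proof -
  have "M *v x = matrix_fun A B \<phi> *v x" for x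
  proof -
    have "M *v x = M *v (\<Sum>b\<in>B. (x \<bullet> b) *\<^sub>R b)"
      using eigenbasis_expand[OF B] by simp
    also have "\<dots> = (\<Sum>b\<in>B. (x \<bullet> b) *\<^sub>R (M *v b))"
      by (simp add: linear_sum[OF matrix_vector_mul_linear] matrix_vector_mult_scaleR o_def)
    also have "\<dots> = matrix_fun A B \<phi> *v x"
      unfolding matrix_fun_apply using M by (intro sum.cong) (simp_all add: mult.commute)
    finally show ?thesis .
  qed
  then show ?thesis by (simp add: matrix_eq)
qed

lemma matrix_fun_id:
  assumes "eigenbasis A B"
  shows "matrix_fun A B (\<lambda>t. t) = A"
  using matrix_fun_unique[OF assms, of A "\<lambda>t. t"] assms by (simp add: eigenbasis_def)

section \<open>Square roots and pseudo-inverses\<close>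

lemma psd_inner:
  assumes "psd R"
  shows "(R *v x) \<bullet> y = x \<bullet> (R *v y)"
  using assms symmetric_matrix_inner unfolding psd_def by blast

lemma psd_square_eigenvector:
  fixes R K :: "real^'n^'n"
  assumes R: "psd R" "R ** R = K" and b: "K *v b = k *\<^sub>R b" and k: "0 \<le> k"
  shows "R *v b = sqrt k *\<^sub>R b"
proof -
  define w where "w = R *v b - sqrt k *\<^sub>R b"
  have RR: "R *v (R *v x) = K *v x" for x
    using R(2) by (simp add: matrix_vector_mul_assoc)
  have Rw: "R *v w = (- sqrt k) *\<^sub>R w"
    using b k by (simp add: w_def RR matrix_vector_mult_diff_distrib matrix_vector_mult_scaleR
        scaleR_diff_right real_sqrt_mult[symmetric])
  show ?thesis
  proof (cases "k = 0")
    case True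
    have "(R *v b) \<bullet> (R *v b) = b \<bullet> (K *v b)"
      using psd_inner[OF R(1)] RR by metis
    then show ?thesis using True b by simp
  next
    case False
    have "0 \<le> w \<bullet> (R *v w)"
      using R(1) by (simp add: psd_def)
    then have "w \<bullet> w \<le> 0"
      using False k by (simp add: Rw mult_le_0_iff)
    then have "w = 0"
      by (metis inner_eq_zero_iff inner_ge_zero order_antisym)
    then show ?thesis by (simp add: w_def)
  qed
qed

lemma msqrt:
  fixes K :: "real^'n^'n"
  assumes K: "psd K"
  shows psd_msqrt: "psd (msqrt K)" and msqrt_square: "msqrt K ** msqrt K = K"
proof -
  obtain B where B: "eigenbasis K B"
    using symmetric_matrix_eigenbasis K unfolding psd_def by blast
  have eig: "K *v b = (b \<bullet> (K *v b)) *\<^sub>R b" "0 \<le> b \<bullet> (K *v b)" if "b \<in> B" for b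
    using B K that by (auto simp: eigenbasis_def psd_def)
  define R where "R = matrix_fun K B sqrt"
  have R: "psd R \<and> R ** R = K"
  proof
    show "psd R"
      using eig(2) by (simp add: psd_def R_def matrix_fun_symmetric matrix_fun_apply inner_sum_right
          sum_nonneg mult.assoc)
    have "R ** R = matrix_fun K B (\<lambda>t. sqrt t * sqrt t)"
      by (simp add: R_def matrix_fun_mult[OF B])
    also have "\<dots> = matrix_fun K B (\<lambda>t. t)"
      using eig(2) by (intro matrix_fun_cong) simp
    finally show "R ** R = K"
      using matrix_fun_id[OF B] by simp
  qed
  have "msqrt K = R"
    unfolding msqrt_def
  proof (rule the_equality)
    fix R' assume "psd R' \<and> R' ** R' = K"
    then show "R' = R"
      unfolding R_def using eig psd_square_eigenvector by (intro matrix_fun_unique[OF B]) blast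
  qed (fact R)
  then show "psd (msqrt K)" "msqrt K ** msqrt K = K"
    using R by simp_all
qed

definition moore_penrose :: "real^'n^'m \<Rightarrow> real^'m^'n \<Rightarrow> bool" where
  "moore_penrose A X \<longleftrightarrow> A ** X ** A = A \<and> X ** A ** X = X \<and>
     transpose (A ** X) = A ** X \<and> transpose (X ** A) = X ** A"

lemma moore_penrose_unique:
  assumes X: "moore_penrose A X" and Y: "moore_penrose A Y"
  shows "X = Y"
proof -
  note X = X[unfolded moore_penrose_def] and Y = Y[unfolded moore_penrose_def]
  have AX: "A ** X = A ** Y"
  proof -
    have "A ** X = transpose (A ** Y) ** transpose (A ** X)"
      using X Y by (metis matrix_mul_assoc)
    also have "\<dots> = transpose (A ** X ** A ** Y)"
      by (simp add: matrix_transpose_mul matrix_mul_assoc)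
    finally show ?thesis using X Y by simp
  qed
  have XA: "X ** A = Y ** A"
  proof -
    have "X ** A = transpose (X ** A) ** transpose (Y ** A)"
      using X Y by (metis matrix_mul_assoc)
    also have "\<dots> = transpose (Y ** (A ** X ** A))"
      by (simp add: matrix_transpose_mul matrix_mul_assoc)
    finally show ?thesis using X Y by simp
  qed
  have "X = X ** A ** Y"
    using X AX by (metis matrix_mul_assoc)
  also have "\<dots> = Y"
    using XA Y by simp
  finally show ?thesis .
qed

lemma pinv_eqI:
  assumes "moore_penrose A X"
  shows "pinv A = X"
  unfolding pinv_def moore_penrose_def[symmetric]
proof (rule the_equality)
  show "moore_penrose A X" by (fact assms)
qed (use assms moore_penrose_unique in blast)

lemma moore_penrose_matrix_fun_inverse:
  assumes B: "eigenbasis M B"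
  shows "moore_penrose M (matrix_fun M B inverse)"
proof -
  define X where "X = matrix_fun M B inverse"
  note M = matrix_fun_id[OF B, symmetric]
  have MX: "M ** X = matrix_fun M B (\<lambda>t. t * inverse t)" and XM: "X ** M = matrix_fun M B (\<lambda>t. t * inverse t)"
    by (subst M; simp add: X_def matrix_fun_mult[OF B] mult.commute)+
  have "M ** X ** M = M"
  proof -
    have "M ** X ** M = matrix_fun M B (\<lambda>t. t * inverse t) ** matrix_fun M B (\<lambda>t. t)"
      using MX M by simp
    also have "\<dots> = M"
      unfolding matrix_fun_mult[OF B] by (subst (2) M, rule matrix_fun_cong) (simp add: field_simps)
    finally show ?thesis .
  qed
  moreover have "X ** M ** X = X"
  proof -
    have "X ** M ** X = matrix_fun M B (\<lambda>t. t * inverse t) ** matrix_fun M B inverse"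
      using XM by (simp add: X_def)
    also have "\<dots> = X"
      unfolding matrix_fun_mult[OF B] X_def by (rule matrix_fun_cong) (simp add: field_simps)
    finally show ?thesis .
  qed
  ultimately show ?thesis
    unfolding moore_penrose_def X_def[symmetric] MX XM by (simp add: matrix_fun_symmetric)
qed

lemma pinv_symmetric:
  fixes M :: "real^'n^'n"
  assumes "transpose M = M"
  shows "transpose (pinv M) = pinv M" "M ** pinv M ** M = M" "pinv M ** M ** pinv M = pinv M"
proof -
  obtain B where B: "eigenbasis M B"
    using symmetric_matrix_eigenbasis[OF assms] by blast
  note X = moore_penrose_matrix_fun_inverse[OF B]
  then show "transpose (pinv M) = pinv M" "M ** pinv M ** M = M" "pinv M ** M ** pinv M = pinv M"
    using pinv_eqI[OF X] by (simp_all add: matrix_fun_symmetric moore_penrose_def)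
qed

section \<open>Orthogonal projections\<close>

definition orth_proj :: "real^'n^'n \<Rightarrow> bool" where
  "orth_proj P \<longleftrightarrow> transpose P = P \<and> P ** P = P"

definition col_proj :: "real^'m^'n \<Rightarrow> real^'n^'n" where
  "col_proj S = S ** pinv (transpose S ** S) ** transpose S"

lemma orth_proj_inner_self:
  assumes "orth_proj P"
  shows "x \<bullet> (P *v x) = (norm (P *v x))^2"
proof -
  have "x \<bullet> (P *v x) = x \<bullet> (P *v (P *v x))"
    using assms by (simp add: orth_proj_def matrix_vector_mul_assoc)
  also have "\<dots> = (norm (P *v x))^2"
    using assms by (metis orth_proj_def power2_norm_eq_inner symmetric_matrix_inner)
  finally show ?thesis .
qed

lemma orth_proj_complement:
  assumes "orth_proj P"
  shows "orth_proj (mat 1 - P)"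
proof -
  have P: "transpose P = P" "\<And>x. P *v (P *v x) = P *v x"
    using assms by (simp_all add: orth_proj_def matrix_vector_mul_assoc)
  have "transpose (mat 1 - P) = mat 1 - P"
    using symmetric_matrix_inner[OF P(1)]
    by (intro symmetric_matrixI) (simp add: matrix_vector_mult_diff_rdistrib inner_diff_left inner_diff_right)
  moreover have "(mat 1 - P) ** (mat 1 - P) = mat 1 - P"
    using P(2) by (simp add: matrix_eq matrix_vector_mul_assoc[symmetric] matrix_vector_mult_diff_rdistrib
        matrix_vector_mult_diff_distrib)
  ultimately show ?thesis
    by (simp add: orth_proj_def)
qed

lemma orth_proj_pythagoras:
  assumes "orth_proj P"
  shows "(norm x)^2 = (norm (P *v x))^2 + (norm (x - P *v x))^2"
  using orth_proj_inner_self[OF assms, of x]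
  by (simp add: power2_norm_eq_inner inner_diff_left inner_diff_right inner_commute)

lemma orth_proj_sandwich_inner:
  fixes B :: "real^'p^'n"
  assumes "orth_proj Q"
  shows "d \<bullet> ((B ** Q ** transpose B) *v d) = (norm (Q *v (transpose B *v d)))^2"
  using orth_proj_inner_self[OF assms, of "transpose B *v d"]
  by (metis dot_lmul_matrix matrix_vector_mul_assoc transpose_matrix_vector)

lemma orth_proj_col_proj: "orth_proj (col_proj S)"
proof -
  have M: "transpose (transpose S ** S) = transpose S ** S"
    by (simp add: matrix_transpose_mul)
  note X = pinv_symmetric[OF M]
  have "col_proj S ** col_proj S
      = S ** (pinv (transpose S ** S) ** (transpose S ** S) ** pinv (transpose S ** S)) ** transpose S"
    by (simp add: col_proj_def matrix_mul_assoc)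
  also have "\<dots> = col_proj S"
    using X(3) by (simp add: col_proj_def)
  moreover have "transpose (col_proj S) = col_proj S"
    using X(1) by (simp add: col_proj_def matrix_transpose_mul matrix_mul_assoc)
  ultimately show ?thesis
    by (simp add: orth_proj_def)
qed

lemma col_proj_range: "col_proj S *v (S *v a) = S *v a"
proof -
  define M where "M = transpose S ** S"
  define y where "y = pinv M *v (M *v a) - a"
  have "M *v y = 0"
    using pinv_symmetric(2)[of M]
    by (simp add: M_def y_def matrix_transpose_mul matrix_vector_mult_diff_distrib
        matrix_vector_mul_assoc matrix_mul_assoc)
  then have "(S *v y) \<bullet> (S *v y) = 0"
    by (simp add: matrix_vector_mult_inner_transpose M_def matrix_vector_mul_assoc)
  then have "S *v (pinv M *v (M *v a)) = S *v a"
    by (simp add: y_def matrix_vector_mult_diff_distrib)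
  then show ?thesis
    by (simp add: col_proj_def M_def matrix_vector_mul_assoc[symmetric])
qed

lemma col_proj_kernel:
  assumes "transpose S *v r = 0"
  shows "col_proj S *v r = 0"
  using assms by (simp add: col_proj_def matrix_vector_mul_assoc[symmetric])

section \<open>The constant \<open>Z\<^sub>f\<close>\<close>

lemma stationary_quadratic_growth:
  fixes f :: "real^'n \<Rightarrow> real" and B :: "real^'p^'n"
  assumes f_convex: "convex_on UNIV f" and f_diff: "\<forall>x. f differentiable (at x)"
    and stat: "transpose B *v grad f (B *v x0) + lam *\<^sub>R x0 = 0"
  shows "f (B *v x0) + lam / 2 * (norm x0)^2 + lam / 2 * (norm (y - x0))^2
           \<le> f (B *v y) + lam / 2 * (norm y)^2"
proof -
  have "grad f (B *v x0) \<bullet> (B *v y - B *v x0) = (transpose B *v grad f (B *v x0)) \<bullet> (y - x0)"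
    by (metis inner_commute matrix_vector_mult_diff_distrib matrix_vector_mult_inner_transpose)
  also have "\<dots> = - lam * (x0 \<bullet> (y - x0))"
    using stat by (simp add: eq_neg_iff_add_eq_0[symmetric])
  finally have "f (B *v x0) - lam * (x0 \<bullet> (y - x0)) \<le> f (B *v y)"
    using convex_grad_above_tangent[OF f_convex f_diff, of "B *v x0" "B *v y"] by simp
  moreover have "(norm y)^2 = (norm x0)^2 + 2 * (x0 \<bullet> (y - x0)) + (norm (y - x0))^2"
    unfolding power2_norm_eq_inner by (simp add: inner_diff_left inner_diff_right inner_commute)
  then have "lam / 2 * (norm y)^2
      = lam / 2 * (norm x0)^2 + lam * (x0 \<bullet> (y - x0)) + lam / 2 * (norm (y - x0))^2"
    by (simp add: algebra_simps del: inner_diff_right)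
  ultimately show ?thesis
    by linarith
qed

context
  fixes f :: "real^'n \<Rightarrow> real" and lam :: real and B :: "real^'p^'n" and x0 :: "real^'p"
  assumes f_convex: "convex_on UNIV f" and f_diff: "\<forall>x. f differentiable (at x)" and lam_pos: "0 < lam"
    and stat: "transpose B *v grad f (B *v x0) + lam *\<^sub>R x0 = 0"
begin

lemma Zf_argmin:
  "(SOME x. \<forall>y. f (B *v x) + lam / 2 * (norm x)^2 \<le> f (B *v y) + lam / 2 * (norm y)^2) = x0"
proof (rule some_equality)
  note growth = stationary_quadratic_growth[OF f_convex f_diff stat]
  show "\<forall>y. f (B *v x0) + lam / 2 * (norm x0)^2 \<le> f (B *v y) + lam / 2 * (norm y)^2"
  proof
    fix y
    have "0 \<le> lam / 2 * (norm (y - x0))^2"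
      using lam_pos by simp
    then show "f (B *v x0) + lam / 2 * (norm x0)^2 \<le> f (B *v y) + lam / 2 * (norm y)^2"
      using growth[of y] by linarith
  qed
  fix x assume "\<forall>y. f (B *v x) + lam / 2 * (norm x)^2 \<le> f (B *v y) + lam / 2 * (norm y)^2"
  then have "f (B *v x) + lam / 2 * (norm x)^2 \<le> f (B *v x0) + lam / 2 * (norm x0)^2"
    by blast
  then have "lam / 2 * (norm (x - x0))^2 \<le> 0"
    using growth[of x] by linarith
  then show "x = x0"
    using lam_pos by (simp add: mult_le_0_iff)
qed

lemma Zf_eq:
  "Zf f lam B S = Sup (insert 0 ((\<lambda>d. norm ((mat 1 - col_proj S) *v (transpose B *v d)) / norm d) `
     {d. grad f (B *v x0) + d \<in> conj_dom f \<and> d \<noteq> 0}))"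
proof -
  have Q: "orth_proj (mat 1 - col_proj S)"
    by (intro orth_proj_complement orth_proj_col_proj)
  define g where "g = grad f (B *v x0)"
  have "(\<lambda>z. z - g) ` conj_dom f = {d. g + d \<in> conj_dom f}"
    by (auto intro: image_eqI[where x = "g + _"])
  moreover have "sqrt ((d \<bullet> ((B ** (mat 1 - col_proj S) ** transpose B) *v d)) / (norm d)^2)
      = norm ((mat 1 - col_proj S) *v (transpose B *v d)) / norm d" for d
    unfolding orth_proj_sandwich_inner[OF Q] real_sqrt_divide by simp
  ultimately have "{sqrt ((d \<bullet> ((B ** (mat 1 - col_proj S) ** transpose B) *v d)) / (norm d)^2) | d.
          d \<in> (\<lambda>z. z - g) ` conj_dom f \<and> d \<noteq> 0}
      = (\<lambda>d. norm ((mat 1 - col_proj S) *v (transpose B *v d)) / norm d) `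
          {d. g + d \<in> conj_dom f \<and> d \<noteq> 0}"
    by auto
  then show ?thesis
    unfolding Zf_def Let_def Zf_argmin col_proj_def g_def by simp
qed

lemma bdd_above_Zf_set:
  "bdd_above (insert 0 ((\<lambda>d. norm ((mat 1 - col_proj S) *v (transpose B *v d)) / norm d) ` D))"
proof -
  obtain C where C: "\<And>x. norm (((mat 1 - col_proj S) ** transpose B) *v x) \<le> norm x * C"
    using bounded_linear.bounded[OF matrix_vector_mul_bounded_linear] by blast
  have "norm ((mat 1 - col_proj S) *v (transpose B *v d)) / norm d \<le> \<bar>C\<bar>" for d
  proof (cases "d = 0")
    case False
    have "norm ((mat 1 - col_proj S) *v (transpose B *v d)) \<le> norm d * C"
      using C[of d] by (simp add: matrix_vector_mul_assoc[symmetric])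
    also have "\<dots> \<le> norm d * \<bar>C\<bar>"
      by (rule mult_left_mono[OF abs_ge_self norm_ge_zero])
    finally have "norm ((mat 1 - col_proj S) *v (transpose B *v d)) / norm d \<le> norm d * \<bar>C\<bar> / norm d"
      by (rule divide_right_mono) simp
    then show ?thesis
      using False by simp
  qed simp
  then show ?thesis
    by (intro bdd_aboveI[of _ "\<bar>C\<bar>"]) auto
qed

lemma Zf_nonneg: "0 \<le> Zf f lam B S"
  unfolding Zf_eq by (rule cSup_upper[OF insertI1 bdd_above_Zf_set])

lemma Zf_bound:
  assumes "grad f (B *v x0) + d \<in> conj_dom f"
  shows "norm ((mat 1 - col_proj S) *v (transpose B *v d)) \<le> Zf f lam B S * norm d"
proof (cases "d = 0")
  case False
  with assms have "norm ((mat 1 - col_proj S) *v (transpose B *v d)) / norm d \<le> Zf f lam B S"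
    unfolding Zf_eq by (intro cSup_upper[OF _ bdd_above_Zf_set]) auto
  with False show ?thesis
    by (simp add: divide_le_eq)
qed simp

end

section \<open>The error bound\<close>

lemma convex_grad_in_conj_dom:
  fixes f :: "real^'n \<Rightarrow> real"
  assumes "convex_on UNIV f" "\<forall>x. f differentiable (at x)"
  shows "grad f x \<in> conj_dom f"
  unfolding conj_dom_def
proof (intro CollectI exI allI)
  fix w
  show "w \<bullet> grad f x - f w \<le> x \<bullet> grad f x - f x"
    using convex_grad_above_tangent[OF assms, of x w] by (simp add: inner_diff_right inner_commute)
qed

lemma sketch_error_scalar_bound:
  fixes lam mu Z t D X p :: real
  assumes "0 < lam" "0 < mu" "0 \<le> Z" "0 \<le> t" "0 \<le> D" "0 \<le> X"
    and coco: "lam * t^2 \<le> mu * (lam * D * X - p)" and zf: "D \<le> Z * t" and lam_ge: "2 * mu * Z^2 \<le> lam"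
  shows "p + D^2 \<le> lam * mu * Z^2 * X^2 / 2"
proof -
  have "mu * D^2 \<le> mu * (Z * t)^2"
    using assms by (intro mult_left_mono power_mono) auto
  also have "\<dots> \<le> lam * t^2 / 2"
    using lam_ge mult_right_mono[OF lam_ge, of "t^2"] by (simp add: power_mult_distrib)
  finally have D2: "mu * D^2 \<le> lam * t^2 / 2" .
  have "mu * (lam * D * X) \<le> mu * (lam * (Z * t) * X)"
    using assms by (intro mult_left_mono mult_right_mono) auto
  then have "mu * (p + D^2) \<le> mu * lam * Z * t * X - lam * t^2 / 2"
    using coco D2 by (simp add: algebra_simps)
  also have "\<dots> \<le> mu * (lam * mu * Z^2 * X^2 / 2)"
  proof -
    have "0 \<le> lam / 2 * (t - mu * Z * X)^2"
      using assms by simp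
    then show ?thesis
      by (simp add: power2_eq_square algebra_simps)
  qed
  finally show ?thesis
    using assms(2) by simp
qed

lemma orth_proj_error_bound:
  fixes P :: "real^'n^'n" and u x :: "real^'n"
  assumes P: "orth_proj P" and "0 < lam" "0 < mu" "0 \<le> Z" "0 \<le> t"
    and coco: "lam * t^2 \<le> mu * (u \<bullet> (- (P *v u) - lam *\<^sub>R (x - P *v x)))"
    and zf: "norm (u - P *v u) \<le> Z * t" and lam_ge: "2 * mu * Z^2 \<le> lam"
  shows "norm u \<le> lam * (sqrt (mu / (2 * lam)) * Z * norm x)"
proof -
  have "u \<bullet> (P *v x) = (P *v u) \<bullet> x"
    using P by (metis orth_proj_def symmetric_matrix_inner)
  then have "u \<bullet> (x - P *v x) = (u - P *v u) \<bullet> x"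
    by (simp add: inner_diff_left inner_diff_right)
  also have "\<dots> \<ge> - (norm (u - P *v u) * norm x)"
    using Cauchy_Schwarz_ineq2[of "u - P *v u" x] by linarith
  finally have "lam * (- (norm (u - P *v u) * norm x)) \<le> lam * (u \<bullet> (x - P *v x))"
    using \<open>0 < lam\<close> by (intro mult_left_mono) auto
  moreover have "u \<bullet> (- (P *v u) - lam *\<^sub>R (x - P *v x)) = - lam * (u \<bullet> (x - P *v x)) - (norm (P *v u))^2"
    using orth_proj_inner_self[OF P, of u] by (simp add: inner_diff_right)
  ultimately have "u \<bullet> (- (P *v u) - lam *\<^sub>R (x - P *v x))
      \<le> lam * norm (u - P *v u) * norm x - (norm (P *v u))^2"
    by (simp add: mult.assoc)
  then have "lam * t^2 \<le> mu * (lam * norm (u - P *v u) * norm x - (norm (P *v u))^2)"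
    using coco mult_left_mono[of _ _ mu] \<open>0 < mu\<close> by (meson less_imp_le order_trans)
  from sketch_error_scalar_bound[OF assms(2-5) norm_ge_zero norm_ge_zero this zf lam_ge]
  have "(norm u)^2 \<le> lam * mu * Z^2 * (norm x)^2 / 2"
    using orth_proj_pythagoras[OF P, of u] by simp
  also have "\<dots> = lam^2 * (mu / (2 * lam)) * Z^2 * (norm x)^2"
    using \<open>0 < lam\<close> by (simp add: power2_eq_square)
  also have "\<dots> = (lam * (sqrt (mu / (2 * lam)) * Z * norm x))^2"
    using \<open>0 < lam\<close> \<open>0 < mu\<close> by (simp only: power_mult_distrib real_sqrt_pow2 zero_le_divide_iff) simp
  finally have "(norm u)^2 \<le> (lam * (sqrt (mu / (2 * lam)) * Z * norm x))^2" .
  moreover have "0 \<le> lam * (sqrt (mu / (2 * lam)) * Z * norm x)"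
    using \<open>0 < lam\<close> \<open>0 < mu\<close> \<open>0 \<le> Z\<close> by simp
  ultimately show ?thesis
    by (rule power2_le_imp_le)
qed

lemma psd_square_kernel:
  assumes "psd B" "B ** B = K" "K *v v = 0"
  shows "B *v v = 0"
proof -
  have "(B *v v) \<bullet> (B *v v) = v \<bullet> (K *v v)"
    using assms(1,2) psd_inner by (metis matrix_vector_mul_assoc)
  then show ?thesis
    using assms(3) by simp
qed

lemma col_proj_stationary:
  assumes "transpose S *v (r + c *\<^sub>R (S *v a)) = 0"
  shows "col_proj S *v r = - c *\<^sub>R (S *v a)"
  using col_proj_kernel[OF assms] col_proj_range[of S a]
  by (simp add: matrix_vector_right_distrib matrix_vector_mult_scaleR eq_neg_iff_add_eq_0)

lemma sketch_gap_cocoercive: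
  fixes f :: "real^'n \<Rightarrow> real" and B :: "real^'n^'n" and S :: "real^'m^'n"
  assumes B_sym: "transpose B = B" and lam_pos: "0 < lam"
    and f_convex: "convex_on UNIV f" and f_diff: "\<forall>x. f differentiable (at x)"
    and f_lip: "\<forall>x y. norm (grad f x - grad f y) \<le> mu * norm (x - y)"
    and full: "B *v grad f (B *v x) = - lam *\<^sub>R x"
    and sketch: "col_proj S *v (B *v grad f (B *v (S *v a))) = - lam *\<^sub>R (S *v a)"
  defines "d \<equiv> grad f (B *v (S *v a)) - grad f (B *v x)"
  shows "lam * (norm d)^2
           \<le> mu * ((B *v d) \<bullet> (- (col_proj S *v (B *v d)) - lam *\<^sub>R (x - col_proj S *v x)))"
proof -
  have "(norm d)^2 \<le> mu * (d \<bullet> (B *v (S *v a) - B *v x))"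
    using grad_cocoercive[OF f_convex f_diff f_lip] by (simp add: d_def)
  also have "d \<bullet> (B *v (S *v a) - B *v x) = (B *v d) \<bullet> (S *v a - x)"
    using symmetric_matrix_inner[OF B_sym] by (simp add: matrix_vector_mult_diff_distrib)
  finally have "lam * (norm d)^2 \<le> lam * (mu * ((B *v d) \<bullet> (S *v a - x)))"
    using lam_pos by simp
  also have "\<dots> = mu * ((B *v d) \<bullet> (lam *\<^sub>R (S *v a - x)))"
    by simp
  moreover have "lam *\<^sub>R (S *v a - x) = - (col_proj S *v (B *v d)) - lam *\<^sub>R (x - col_proj S *v x)"
    using sketch full
    by (simp add: d_def matrix_vector_mult_diff_distrib matrix_vector_mult_scaleR scaleR_diff_right
        algebra_simps)
  ultimately show ?thesis
    by simp
qed

lemma sketch_error_bound: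
  fixes f :: "real^'n \<Rightarrow> real" and B :: "real^'n^'n" and S :: "real^'m^'n"
  assumes B_sym: "transpose B = B" and lam_pos: "0 < lam"
    and f_convex: "convex_on UNIV f" and f_diff: "\<forall>x. f differentiable (at x)"
    and f_lip: "\<forall>x y. norm (grad f x - grad f y) \<le> mu * norm (x - y)"
    and full: "B *v grad f (B *v x) = - lam *\<^sub>R x"
    and sketch: "col_proj S *v (B *v grad f (B *v (S *v a))) = - lam *\<^sub>R (S *v a)"
    and lam_ge: "2 * mu * (Zf f lam B S)^2 \<le> lam"
  shows "norm ((- (1 / lam)) *\<^sub>R (B *v grad f (B *v (S *v a))) - x)
           \<le> sqrt (mu / (2 * lam)) * Zf f lam B S * norm x"
proof -
  define Z where "Z = Zf f lam B S"
  define P where "P = col_proj S"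
  define zs where "zs = grad f (B *v x)"
  define zh where "zh = grad f (B *v (S *v a))"
  define d where "d = zh - zs"
  define u where "u = B *v d"
  have P: "orth_proj P"
    by (simp add: P_def orth_proj_col_proj)
  have stat: "transpose B *v grad f (B *v x) + lam *\<^sub>R x = 0"
    using full B_sym by simp
  have Z: "0 \<le> Z"
    unfolding Z_def by (rule Zf_nonneg[OF f_convex f_diff lam_pos stat])
  have "x = (- (1 / lam)) *\<^sub>R (B *v zs)"
    using full lam_pos by (simp add: zs_def)
  then have lhs: "(- (1 / lam)) *\<^sub>R (B *v zh) - x = (- (1 / lam)) *\<^sub>R u"
    by (simp add: u_def d_def matrix_vector_mult_diff_distrib scaleR_diff_right)
  have "norm u \<le> lam * (sqrt (mu / (2 * lam)) * Z * norm x)"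
  proof (cases "d = 0")
    case True
    then show ?thesis
      using lam_pos Z lipschitz_const_nonneg[OF f_lip] by (simp add: u_def)
  next
    case False
    have "grad f (B *v x) + d \<in> conj_dom f"
      using convex_grad_in_conj_dom[OF f_convex f_diff] by (simp add: d_def zh_def zs_def)
    from Zf_bound[OF f_convex f_diff lam_pos stat this]
    have zf: "norm (u - P *v u) \<le> Z * norm d"
      using B_sym by (simp add: Z_def P_def u_def zs_def matrix_vector_mult_diff_rdistrib)
    have coco: "lam * (norm d)^2 \<le> mu * (u \<bullet> (- (P *v u) - lam *\<^sub>R (x - P *v x)))"
      using sketch_gap_cocoercive[OF B_sym lam_pos f_convex f_diff f_lip full sketch]
      by (simp add: P_def u_def d_def zh_def zs_def)
    have "0 < mu"
    proof (rule ccontr)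
      assume "\<not> 0 < mu"
      then have "lam * (norm d)^2 \<le> 0"
        using coco lipschitz_const_nonneg[OF f_lip] by simp
      then show False
        using False lam_pos by (simp add: mult_le_0_iff)
    qed
    from orth_proj_error_bound[OF P lam_pos this Z norm_ge_zero coco zf] lam_ge
    show ?thesis
      by (simp add: Z_def)
  qed
  then have "norm u / lam \<le> sqrt (mu / (2 * lam)) * Z * norm x"
    using lam_pos by (simp add: pos_divide_le_eq mult.commute)
  moreover have "norm ((- (1 / lam)) *\<^sub>R (B *v zh) - x) = norm u / lam"
    unfolding lhs using lam_pos by simp
  ultimately show ?thesis
    using lam_pos by (simp add: zh_def Z_def)
qed

lemma full_minimizer_stationary:
  fixes K :: "real^'n^'n" and f :: "real^'n \<Rightarrow> real"
  assumes K_psd: "psd K" and f_diff: "\<forall>x. f differentiable (at x)"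
    and ws_min: "\<forall>w. f (K *v ws) + lam / 2 * (ws \<bullet> (K *v ws)) \<le> f (K *v w) + lam / 2 * (w \<bullet> (K *v w))"
  shows "msqrt K *v grad f (msqrt K *v (msqrt K *v ws)) = - lam *\<^sub>R (msqrt K *v ws)"
proof -
  have K_sym: "transpose K = K"
    using K_psd by (simp add: psd_def)
  have KK: "msqrt K *v (msqrt K *v x) = K *v x" for x
    using msqrt_square[OF K_psd] by (simp add: matrix_vector_mul_assoc)
  have "K *v (grad f (K *v ws) + lam *\<^sub>R ws) = 0"
    using minimizer_grad_eq_0[OF f_diff K_sym ws_min] K_sym
    by (simp add: matrix_vector_right_distrib matrix_vector_mult_scaleR)
  from psd_square_kernel[OF psd_msqrt[OF K_psd] msqrt_square[OF K_psd] this] show ?thesis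
    by (simp add: KK matrix_vector_right_distrib matrix_vector_mult_scaleR eq_neg_iff_add_eq_0)
qed

lemma sketched_minimizer_stationary:
  fixes K :: "real^'n^'n" and St :: "real^'m^'n" and f :: "real^'n \<Rightarrow> real"
  assumes K_psd: "psd K" and f_diff: "\<forall>x. f differentiable (at x)"
    and as_min: "\<forall>a. f ((K ** St) *v as) + lam / 2 * (as \<bullet> ((transpose St ** K ** St) *v as))
                    \<le> f ((K ** St) *v a) + lam / 2 * (a \<bullet> ((transpose St ** K ** St) *v a))"
  defines "S \<equiv> msqrt K ** St"
  shows "col_proj S *v (msqrt K *v grad f (msqrt K *v (S *v as))) = - lam *\<^sub>R (S *v as)"
proof -
  define B where "B = msqrt K"
  have B: "B ** B = K" "transpose B = B"
    using msqrt[OF K_psd] by (auto simp: B_def psd_def)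
  have Q: "transpose St ** K ** St = transpose S ** S"
    using B by (simp add: S_def B_def[symmetric] matrix_transpose_mul) (metis matrix_mul_assoc)
  have L: "transpose (K ** St) = transpose S ** B"
    using B K_psd by (simp add: S_def B_def[symmetric] psd_def matrix_transpose_mul) (metis matrix_mul_assoc)
  have KSt: "(K ** St) *v as = B *v (S *v as)"
    using B by (simp add: S_def B_def[symmetric] matrix_vector_mul_assoc matrix_mul_assoc)
  have "transpose (transpose St ** K ** St) = transpose St ** K ** St"
    unfolding Q by (simp add: matrix_transpose_mul)
  from minimizer_grad_eq_0[OF f_diff this as_min]
  have "transpose S *v (B *v grad f (B *v (S *v as)) + lam *\<^sub>R (S *v as)) = 0"
    unfolding Q L KSt
    by (simp add: matrix_vector_mul_assoc[symmetric] matrix_vector_right_distrib matrix_vector_mult_scaleR)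
  then show ?thesis
    unfolding B_def by (rule col_proj_stationary)
qed

theorem theorem3:
  fixes K :: "real^'n^'n" and St :: "real^'m^'n" and lam mu :: real
    and f :: "real^'n \<Rightarrow> real" and ws :: "real^'n" and as :: "real^'m"
  assumes K_psd: "psd K"
    and lam_pos: "lam > 0"
    and f_convex: "convex_on UNIV f"
    and f_diff: "\<forall>x. f differentiable (at x)"
    and f_lip: "\<forall>x y. norm (grad f x - grad f y) \<le> mu * norm (x - y)"
    and ws_min: "\<forall>w. f (K *v ws) + lam / 2 * (ws \<bullet> (K *v ws)) \<le> f (K *v w) + lam / 2 * (w \<bullet> (K *v w))"
    and as_min: "\<forall>a. f ((K ** St) *v as) + lam / 2 * (as \<bullet> ((transpose St ** K ** St) *v as))
                    \<le> f ((K ** St) *v a) + lam / 2 * (a \<bullet> ((transpose St ** K ** St) *v a))"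
    and lam_ge: "lam \<ge> 2 * mu * (Zf f lam (msqrt K) (msqrt K ** St))^2"
  shows "norm (msqrt K *v ((- (1 / lam)) *\<^sub>R grad f ((K ** St) *v as) - ws))
           \<le> sqrt (mu / (2 * lam)) * Zf f lam (msqrt K) (msqrt K ** St) * norm (msqrt K *v ws)"
proof -
  have "transpose (msqrt K) = msqrt K"
    using psd_msqrt[OF K_psd] by (simp add: psd_def)
  from sketch_error_bound[OF this lam_pos f_convex f_diff f_lip
      full_minimizer_stationary[OF K_psd f_diff ws_min]
      sketched_minimizer_stationary[OF K_psd f_diff as_min] lam_ge]
  show ?thesis
    using msqrt_square[OF K_psd]
    by (simp add: matrix_vector_mult_diff_distrib matrix_vector_mult_scaleR
        matrix_vector_mul_assoc matrix_mul_assoc linear_neg[OF matrix_vector_mul_linear])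
qed

end
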